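(* For every integer $k\ge1$, $N(2k+3,k)=3$ if $3\mid k$ and $N(2k+3,k)=1$ if $3\nmid k$.
   Context: For $n>k\ge1$, $N(n,k)$ is the nullity of the $n\times n$ skew-symmetric Toeplitz matrix $A(n,k)$ whose first $k$ superdiagonals have all entries $1$ and whose remaining superdiagonals have all entries $0$. *)

theory Defs
  imports "Jordan_Normal_Form.Matrix_Kernel"
begin

definition A_mat :: "nat \<Rightarrow> nat \<Rightarrow> real mat" where
  "A_mat n k = mat n n (\<lambda>(i, j).
     if i < j \<and> j - i \<le> k then 1
     else if j < i \<and> i - j \<le> k then -1
     else 0)"

definition N :: "nat \<Rightarrow> nat \<Rightarrow> nat" where
  "N n k = kernel_dim (A_mat n k)"

end

theory Submission
  imports Defs
begin

text \<open>Subtracting consecutive rows turns \<open>A(n,k) x = 0\<close> into the first-row equation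
  \<open>x(1) + ... + x(k) = 0\<close> together with the local relations
  \<open>x(i+k+1) - x(i+1) - x(i) + x(i-k) = 0\<close>, where terms whose index lies outside \<open>0..n-1\<close>
  are dropped. For \<open>n = 2k+3\<close> these relations determine a kernel vector from \<open>x(0), x(1), x(2)\<close>:
  \<open>x(1), ..., x(k)\<close> is 3-periodic with zero sum over each period, and the upper half follows.
  When 3 divides \<open>k\<close> the remaining constraints hold automatically, so the kernel is
  3-dimensional; otherwise they force \<open>x(1) = x(2) = 0\<close>, and the kernel is spanned by the
  indicator vector of \<open>{0, k+1, 2k+2}\<close>.\<close>

lemma kernel_dim_eq_card_pivots:
  fixes A :: "'a::field mat"
  assumes A: "A \<in> carrier_mat nr nc"
    and P: "P \<subseteq> {..<nc}"
    and w_kernel: "\<And>p. p \<in> P \<Longrightarrow> w p \<in> mat_kernel A"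
    and w_pivot: "\<And>p q. p \<in> P \<Longrightarrow> q \<in> P \<Longrightarrow> w p $ q = (if p = q then 1 else 0)"
    and determined: "\<And>v. v \<in> mat_kernel A \<Longrightarrow> (\<And>p. p \<in> P \<Longrightarrow> v $ p = 0) \<Longrightarrow> v = 0\<^sub>v nc"
  shows "kernel_dim A = card P"
proof -
  interpret kernel nr nc A by unfold_locales (rule A)
  have fin: "finite P" using P finite_subset by blast
  have inj: "inj_on w P"
    by (rule inj_onI) (metis w_pivot zero_neq_one)
  let ?B = "w ` P"
  have B: "?B \<subseteq> mat_kernel A" using w_kernel by blast
  have lincomb_at_pivot: "lincomb a ?B $ q = a (w q)" if q: "q \<in> P" for a q
  proof -
    have "lincomb a ?B $ q = (\<Sum>u\<in>?B. a u * u $ q)"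
      using lincomb_index[OF _ B] P q by blast
    also have "\<dots> = (\<Sum>p\<in>P. a (w p) * w p $ q)"
      using sum.reindex[OF inj] by simp
    also have "\<dots> = (\<Sum>p\<in>P. if p = q then a (w q) else 0)"
      using q by (intro sum.cong) (auto simp: w_pivot)
    also have "\<dots> = a (w q)" using fin q by simp
    finally show ?thesis .
  qed
  have "lin_indpt ?B"
  proof (rule Ker.finite_lin_indpt2)
    fix a assume "lincomb a ?B = 0\<^sub>v nc"
    then show "\<forall>u\<in>?B. a u = 0"
      using lincomb_at_pivot P by (metis imageE index_zero_vec(1) lessThan_iff subsetD)
  qed (use fin B in auto)
  moreover have "span ?B = mat_kernel A"
  proof
    show "span ?B \<subseteq> mat_kernel A" using B by (rule Ker.span_is_subset2)
    show "mat_kernel A \<subseteq> span ?B"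
    proof
      fix v assume v: "v \<in> mat_kernel A"
      define a where "a u = v $ inv_into P w u" for u
      have l: "lincomb a ?B \<in> mat_kernel A" using Ker.lincomb_closed[OF B] by simp
      have dims: "dim_vec v = nc" "dim_vec (lincomb a ?B) = nc"
        using v l mat_kernel_carrier[OF A] by auto
      have diff: "v - lincomb a ?B = 0\<^sub>v nc"
      proof (rule determined)
        show "v - lincomb a ?B \<in> mat_kernel A"
          using v l mat_kernel[OF A] mult_minus_distrib_mat_vec[OF A] by auto
        fix p assume p: "p \<in> P"
        then show "(v - lincomb a ?B) $ p = 0"
          using dims P lincomb_at_pivot[OF p] by (auto simp: a_def inv_into_f_f[OF inj])
      qed
      have "v = lincomb a ?B"
      proof (rule eq_vecI)
        show "dim_vec v = dim_vec (lincomb a ?B)" using dims by simp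
        fix j assume "j < dim_vec (lincomb a ?B)"
        then show "v $ j = lincomb a ?B $ j"
          using arg_cong[OF diff, of "\<lambda>u. u $ j"] dims by simp
      qed
      then show "v \<in> span ?B" using Ker.finite_span[OF _ B] fin by auto
    qed
  qed
  ultimately have "basis ?B" using B unfolding Ker.basis_def by simp
  then have "dim = card ?B" using fin by (intro Ker.dim_basis) auto
  then show ?thesis using card_image[OF inj] by simp
qed

lemma A_mat_carrier: "A_mat n k \<in> carrier_mat n n"
  by (simp add: A_mat_def)

lemma A_mat_mult_vec_index:
  assumes "i < n" "v \<in> carrier_vec n"
  shows "(A_mat n k *\<^sub>v v) $ i = (\<Sum>j<n. A_mat n k $$ (i, j) * v $ j)"
  using assms A_mat_carrier[of n k] by (auto simp: scalar_prod_def lessThan_atLeast0)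

definition row_diff :: "nat \<Rightarrow> nat \<Rightarrow> (nat \<Rightarrow> real) \<Rightarrow> nat \<Rightarrow> real" where
  "row_diff n k x i =
     (if i + k + 1 < n then x (i + k + 1) else 0) - x (i + 1) - x i + (if k \<le> i then x (i - k) else 0)"

lemma A_mat_mult_vec_0:
  assumes "k < n" "v \<in> carrier_vec n"
  shows "(A_mat n k *\<^sub>v v) $ 0 = (\<Sum>j=1..k. v $ j)"
proof -
  have "(A_mat n k *\<^sub>v v) $ 0 = (\<Sum>j<n. A_mat n k $$ (0, j) * v $ j)"
    using assms by (intro A_mat_mult_vec_index) auto
  also have "\<dots> = (\<Sum>j<n. if j \<in> {1..k} then v $ j else 0)"
    by (intro sum.cong) (auto simp: A_mat_def)
  also have "\<dots> = (\<Sum>j\<in>{..<n} \<inter> {1..k}. v $ j)"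
    by (simp add: sum.inter_restrict)
  also have "{..<n} \<inter> {1..k} = {1..k}" using assms by auto
  finally show ?thesis .
qed

lemma A_mat_mult_vec_Suc:
  assumes k: "1 \<le> k" and i: "Suc i < n" and v: "v \<in> carrier_vec n"
  shows "(A_mat n k *\<^sub>v v) $ Suc i = (A_mat n k *\<^sub>v v) $ i + row_diff n k (($) v) i"
proof -
  let ?d = "\<lambda>m j. if j = m then v $ j else 0"
  have step: "A_mat n k $$ (Suc i, j) * v $ j = A_mat n k $$ (i, j) * v $ j
      + (?d (i + k + 1) j - ?d (i + 1) j - ?d i j + (if k \<le> i then ?d (i - k) j else 0))"
    if "j < n" for j
    using that k i by (auto simp: A_mat_def)
  have "(A_mat n k *\<^sub>v v) $ Suc i = (A_mat n k *\<^sub>v v) $ i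
      + ((\<Sum>j<n. ?d (i + k + 1) j) - (\<Sum>j<n. ?d (i + 1) j) - (\<Sum>j<n. ?d i j)
         + (if k \<le> i then \<Sum>j<n. ?d (i - k) j else 0))"
    using i v by (simp add: A_mat_mult_vec_index step sum.distrib sum_subtractf)
  also have "\<dots> = (A_mat n k *\<^sub>v v) $ i + row_diff n k (($) v) i"
    using i by (auto simp: row_diff_def)
  finally show ?thesis .
qed

lemma mat_kernel_A_mat_iff:
  assumes k: "1 \<le> k" "k < n" and v: "v \<in> carrier_vec n"
  shows "v \<in> mat_kernel (A_mat n k) \<longleftrightarrow>
    (\<Sum>j=1..k. v $ j) = 0 \<and> (\<forall>i. Suc i < n \<longrightarrow> row_diff n k (($) v) i = 0)"
proof -
  let ?r = "\<lambda>i. (A_mat n k *\<^sub>v v) $ i"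
  have "v \<in> mat_kernel (A_mat n k) \<longleftrightarrow> (\<forall>i<n. ?r i = 0)"
    using v A_mat_carrier[of n k] by (auto simp: mat_kernel[OF A_mat_carrier] vec_eq_iff)
  also have "\<dots> \<longleftrightarrow> ?r 0 = 0 \<and> (\<forall>i. Suc i < n \<longrightarrow> ?r (Suc i) = ?r i)"
  proof
    assume "?r 0 = 0 \<and> (\<forall>i. Suc i < n \<longrightarrow> ?r (Suc i) = ?r i)"
    then have "i < n \<longrightarrow> ?r i = 0" for i
      by (induction i) auto
    then show "\<forall>i<n. ?r i = 0" by blast
  qed (use k in auto)
  also have "\<dots> \<longleftrightarrow> (\<Sum>j=1..k. v $ j) = 0 \<and> (\<forall>i. Suc i < n \<longrightarrow> row_diff n k (($) v) i = 0)"
    using k v by (simp add: A_mat_mult_vec_0 A_mat_mult_vec_Suc)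
  finally show ?thesis .
qed

lemma mat_kernel_A_matD:
  assumes "1 \<le> k" "k < n" "v \<in> mat_kernel (A_mat n k)"
  shows "(\<Sum>j=1..k. v $ j) = 0" "\<And>i. Suc i < n \<Longrightarrow> row_diff n k (($) v) i = 0"
  using assms mat_kernel_A_mat_iff mat_kernel_carrier[OF A_mat_carrier] by blast+

definition period3 :: "real \<Rightarrow> real \<Rightarrow> nat \<Rightarrow> real" where
  "period3 b c j = (if j mod 3 = 1 then b else if j mod 3 = 2 then c else - b - c)"

lemma period3_simps [simp]:
  "period3 b c 0 = - b - c" "period3 b c (Suc 0) = b" "period3 b c 2 = c" "period3 b c 3 = - b - c"
  by (simp_all add: period3_def)

lemma period3_zero [simp]: "period3 0 0 j = 0"
  by (simp add: period3_def)

lemma period3_sum3: "period3 b c j + period3 b c (j + 1) + period3 b c (j + 2) = 0"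
  by (auto simp: period3_def mod_Suc)

lemma period3_add_period:
  assumes "3 dvd k \<or> b = 0 \<and> c = 0"
  shows "period3 b c (j + k) = period3 b c j"
  using assms by (auto simp: period3_def)

lemma period3_sum:
  "(\<Sum>j=1..m. period3 b c j) = (if m mod 3 = 0 then 0 else if m mod 3 = 1 then b else b + c)"
  by (induction m) (auto simp: period3_def mod_Suc)

definition kernel_seq :: "nat \<Rightarrow> real \<Rightarrow> real \<Rightarrow> real \<Rightarrow> nat \<Rightarrow> real" where
  "kernel_seq k a b c j =
     (if j = 0 then a
      else if j \<le> k then period3 b c j
      else if j = k + 1 then a + b
      else if j \<le> 2 * k + 1 then - period3 b c (j + 1)
      else a + b + c)"

lemma kernel_seq_row_diff:
  assumes k: "1 \<le> k" and bc: "3 dvd k \<or> b = 0 \<and> c = 0" and i: "i \<le> 2 * k + 1"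
  shows "row_diff (2 * k + 3) k (kernel_seq k a b c) i = 0"
proof -
  let ?p = "period3 b c"
  have per: "?p (j + k) = ?p j" for j using period3_add_period[OF bc] .
  have p: "?p (2 * k + 2) = c" "?p (k + 3) = - b - c" "?p k = - b - c"
    using per[of "k + 2"] per[of 2] per[of 3] per[of 0]
    by (simp_all add: mult_2 add.commute add.left_commute)
  consider "i = 0" | "1 \<le> i" "i < k" | "i = k" | "i = k + 1" | "k + 2 \<le> i" "i \<le> 2 * k"
    | "i = 2 * k + 1"
    using i by linarith
  then show ?thesis
  proof cases
    case 1
    then show ?thesis using k by (simp add: row_diff_def kernel_seq_def)
  next
    case 2
    have "?p (i + k + 2) = ?p (i + 2)" using per[of "i + 2"] by (simp add: add_ac)
    then show ?thesis
      using 2 period3_sum3[of b c i] by (simp add: row_diff_def kernel_seq_def add_ac)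
  next
    case 3
    have "?p (k + k + 2) = c" using p(1) by (simp add: mult_2)
    then show ?thesis using 3 k p by (simp add: row_diff_def kernel_seq_def)
  next
    case 4
    have "?p (Suc (Suc (Suc k))) = - b - c" using p(2) by (simp add: eval_nat_numeral)
    then show ?thesis using 4 k by (simp add: row_diff_def kernel_seq_def)
  next
    case 5
    have "?p (i + 1) = ?p (i - k + 1)" "?p (i + 2) = ?p (i - k + 2)"
      using per[of "i - k + 1"] per[of "i - k + 2"] 5 by simp_all
    then show ?thesis
      using 5 period3_sum3[of b c "i - k"] by (simp add: row_diff_def kernel_seq_def)
  next
    case 6
    then show ?thesis using k p by (simp add: row_diff_def kernel_seq_def)
  qed
qed

lemma kernel_seq_sum:
  assumes "3 dvd k \<or> b = 0 \<and> c = 0"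
  shows "(\<Sum>j=1..k. kernel_seq k a b c j) = 0"
proof -
  have "(\<Sum>j=1..k. kernel_seq k a b c j) = (\<Sum>j=1..k. period3 b c j)"
    by (intro sum.cong) (auto simp: kernel_seq_def)
  then show ?thesis using assms period3_sum[of b c k] by auto
qed

lemma kernel_seq_in_kernel:
  assumes k: "1 \<le> k" and bc: "3 dvd k \<or> b = 0 \<and> c = 0"
  shows "vec (2 * k + 3) (kernel_seq k a b c) \<in> mat_kernel (A_mat (2 * k + 3) k)"
proof -
  let ?n = "2 * k + 3"
  have "(\<Sum>j=1..k. vec ?n (kernel_seq k a b c) $ j) = 0"
    using kernel_seq_sum[OF bc] by simp
  moreover have "row_diff ?n k (($) (vec ?n (kernel_seq k a b c))) i = 0" if "Suc i < ?n" for i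
  proof -
    have "row_diff ?n k (($) (vec ?n (kernel_seq k a b c))) i = row_diff ?n k (kernel_seq k a b c) i"
      using that by (auto simp: row_diff_def)
    also have "\<dots> = 0" using kernel_seq_row_diff[OF k bc] that by simp
    finally show ?thesis .
  qed
  ultimately show ?thesis using k by (simp add: mat_kernel_A_mat_iff)
qed

context
  fixes k :: nat and x :: "nat \<Rightarrow> real"
  assumes k: "1 \<le> k"
    and row_diff_eq_0: "\<And>i. i \<le> 2 * k + 1 \<Longrightarrow> row_diff (2 * k + 3) k x i = 0"
begin

lemma kernel_upper_recurrence:
  assumes "i \<le> k + 1"
  shows "x (i + k + 1) = x i + x (i + 1) - (if k \<le> i then x (i - k) else 0)"
  using row_diff_eq_0[of i] assms by (simp add: row_diff_def)

lemma kernel_lower_sum3: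
  assumes "1 \<le> m" "m + 2 \<le> k"
  shows "x m + x (m + 1) + x (m + 2) = 0"
proof -
  have "x (m + k + 1) + x (m + k + 2) = x (m + 1)"
    using row_diff_eq_0[of "m + k + 1"] assms by (simp add: row_diff_def)
  moreover have "x (m + k + 1) = x m + x (m + 1)"
    using kernel_upper_recurrence[of m] assms by simp
  moreover have "x (m + k + 2) = x (m + 1) + x (m + 2)"
    using kernel_upper_recurrence[of "m + 1"] assms by simp
  ultimately show ?thesis by simp
qed

lemma kernel_lower_eq_period3:
  assumes "1 \<le> j" "j \<le> k"
  shows "x j = period3 (x 1) (x 2) j"
  using assms
proof (induction j rule: less_induct)
  case (less j)
  consider "j = 1" | "j = 2" | "3 \<le> j" using less.prems by linarith
  then show ?case
  proof cases
    case 3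
    define m where "m = j - 2"
    have m: "j = m + 2" "1 \<le> m" using 3 by (simp_all add: m_def)
    have "x j = - x m - x (m + 1)" using kernel_lower_sum3[of m] m less.prems by simp
    also have "\<dots> = - period3 (x 1) (x 2) m - period3 (x 1) (x 2) (m + 1)"
      using less.IH[of m] less.IH[of "m + 1"] m less.prems by simp
    also have "\<dots> = period3 (x 1) (x 2) j"
      using period3_sum3[of "x 1" "x 2" m] m by simp
    finally show ?thesis .
  qed simp_all
qed

lemma kernel_eq_0_if_initial_eq_0:
  assumes "x 0 = 0" "x 1 = 0" "x 2 = 0" and "j \<le> 2 * k + 2"
  shows "x j = 0"
  using assms(4)
proof (induction j rule: less_induct)
  case (less j)
  consider "j = 0" | "1 \<le> j" "j \<le> k" | "k + 1 \<le> j" by linarith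
  then show ?case
  proof cases
    case 1
    then show ?thesis using assms by simp
  next
    case 2
    then show ?thesis using kernel_lower_eq_period3[OF 2] assms(2,3) by (metis period3_zero)
  next
    case 3
    define i where "i = j - k - 1"
    have i: "j = i + k + 1" "i \<le> k + 1" using 3 less.prems by (simp_all add: i_def)
    moreover have "x i = 0" "x (i + 1) = 0" "k \<le> i \<longrightarrow> x (i - k) = 0"
      using less.IH i k by auto
    ultimately show ?thesis using kernel_upper_recurrence[of i] by simp
  qed
qed

lemma kernel_last_row_constraint:
  assumes "2 \<le> k"
  shows "x 1 + x 2 + x k = 0"
proof -
  have "x (2 * k + 2) + x (2 * k + 1) = x (k + 1)"
    using row_diff_eq_0[of "2 * k + 1"] k by (simp add: row_diff_def)
  moreover have "x (2 * k + 2) = x (k + 1) + x (k + 2) - x 1"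
    using kernel_upper_recurrence[of "k + 1"] by (simp add: mult_2)
  moreover have "x (2 * k + 1) = x k + x (k + 1) - x 0"
    using kernel_upper_recurrence[of k] by (simp add: mult_2)
  moreover have "x (k + 1) = x 0 + x 1"
    using kernel_upper_recurrence[of 0] k by simp
  moreover have "x (k + 2) = x 1 + x 2"
    using kernel_upper_recurrence[of 1] assms by (simp add: numeral_2_eq_2)
  ultimately show ?thesis by simp
qed

lemma kernel_initial_eq_0_if_not_dvd:
  assumes "\<not> 3 dvd k" "(\<Sum>j=1..k. x j) = 0" "x 0 = 0"
  shows "x 1 = 0 \<and> x 2 = 0"
proof (cases "k = 1")
  case True
  then show ?thesis using assms kernel_upper_recurrence[of 0] by (simp add: numeral_2_eq_2)
next
  case False
  then have k2: "2 \<le> k" using k by simp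
  have sum: "(\<Sum>j=1..k. period3 (x 1) (x 2) j) = 0"
    using assms(2) kernel_lower_eq_period3 by (metis (no_types, lifting) atLeastAtMost_iff sum.cong)
  have last: "x 1 + x 2 + period3 (x 1) (x 2) k = 0"
    using kernel_last_row_constraint[OF k2] kernel_lower_eq_period3[of k] k2 by simp
  have "k mod 3 = 1 \<or> k mod 3 = 2" using assms(1) by presburger
  then consider "k mod 3 = 1" | "k mod 3 = 2" by blast
  then show ?thesis
  proof cases
    case 1
    have "x 1 = 0" using period3_sum[of "x 1" "x 2" k] sum 1 by simp
    moreover have "period3 (x 1) (x 2) k = x 1" using 1 by (simp add: period3_def)
    ultimately show ?thesis using last by simp
  next
    case 2
    have "x 1 + x 2 = 0" using period3_sum[of "x 1" "x 2" k] sum 2 by simp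
    moreover have "period3 (x 1) (x 2) k = x 2" using 2 by (simp add: period3_def)
    ultimately show ?thesis using last by simp
  qed
qed

end


lemma A_mat_kernel_eq_0_if_initial_eq_0:
  assumes k: "1 \<le> k" and v: "v \<in> mat_kernel (A_mat (2 * k + 3) k)"
    and initial: "v $ 0 = 0" "v $ 1 = 0" "v $ 2 = 0"
  shows "v = 0\<^sub>v (2 * k + 3)"
proof -
  have "v \<in> carrier_vec (2 * k + 3)"
    using v mat_kernel_carrier[OF A_mat_carrier] by blast
  moreover have "v $ j = 0" if "j < 2 * k + 3" for j
    using kernel_eq_0_if_initial_eq_0[of k "($) v" j] mat_kernel_A_matD(2)[OF k _ v] k initial that
    by simp
  ultimately show ?thesis by (intro eq_vecI) auto
qed

lemma A_mat_kernel_initial_eq_0_if_not_dvd: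
  assumes k: "1 \<le> k" and "\<not> 3 dvd k" and v: "v \<in> mat_kernel (A_mat (2 * k + 3) k)"
    and "v $ 0 = 0"
  shows "v $ 1 = 0 \<and> v $ 2 = 0"
  using kernel_initial_eq_0_if_not_dvd[of k "($) v"] mat_kernel_A_matD[OF k _ v] assms by simp

lemma kernel_dim_A_mat_if_dvd:
  assumes k: "1 \<le> k" and dvd: "3 dvd k"
  shows "kernel_dim (A_mat (2 * k + 3) k) = 3"
proof -
  define w where
    "w p = vec (2 * k + 3) (kernel_seq k (of_bool (p = 0)) (of_bool (p = 1)) (of_bool (p = 2)))"
    for p :: nat
  have "2 \<le> k" using k dvd by (auto elim: dvdE)
  then have w_initial: "w p $ 0 = of_bool (p = 0)" "w p $ 1 = of_bool (p = 1)"
    "w p $ 2 = of_bool (p = 2)" for p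
    by (simp_all add: w_def kernel_seq_def)
  have "kernel_dim (A_mat (2 * k + 3) k) = card {0, 1, 2 :: nat}"
  proof (rule kernel_dim_eq_card_pivots[OF A_mat_carrier])
    show "w p \<in> mat_kernel (A_mat (2 * k + 3) k)" for p
      unfolding w_def using k dvd by (intro kernel_seq_in_kernel) auto
    show "w p $ q = (if p = q then 1 else 0)" if "p \<in> {0, 1, 2}" "q \<in> {0, 1, 2}" for p q
      using that w_initial by auto
    show "v = 0\<^sub>v (2 * k + 3)"
      if "v \<in> mat_kernel (A_mat (2 * k + 3) k)" "\<And>p. p \<in> {0, 1, 2} \<Longrightarrow> v $ p = 0" for v
      using k that by (intro A_mat_kernel_eq_0_if_initial_eq_0) auto
  qed auto
  then show ?thesis by simp
qed

lemma kernel_dim_A_mat_if_not_dvd: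
  assumes k: "1 \<le> k" and not_dvd: "\<not> 3 dvd k"
  shows "kernel_dim (A_mat (2 * k + 3) k) = 1"
proof -
  define u where "u = vec (2 * k + 3) (kernel_seq k 1 0 0)"
  have "kernel_dim (A_mat (2 * k + 3) k) = card {0 :: nat}"
  proof (rule kernel_dim_eq_card_pivots[OF A_mat_carrier, where w = "\<lambda>_. u"])
    show "u \<in> mat_kernel (A_mat (2 * k + 3) k)"
      unfolding u_def using k by (intro kernel_seq_in_kernel) auto
    show "v = 0\<^sub>v (2 * k + 3)"
      if "v \<in> mat_kernel (A_mat (2 * k + 3) k)" "\<And>p. p \<in> {0} \<Longrightarrow> v $ p = 0" for v
      using A_mat_kernel_initial_eq_0_if_not_dvd[OF k not_dvd] k that
      by (intro A_mat_kernel_eq_0_if_initial_eq_0) auto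
  qed (auto simp: u_def kernel_seq_def)
  then show ?thesis by simp
qed

theorem theorem8p3:
  fixes k :: nat
  assumes "k \<ge> 1"
  shows "N (2 * k + 3) k = (if 3 dvd k then 3 else 1)"
  using assms kernel_dim_A_mat_if_dvd kernel_dim_A_mat_if_not_dvd by (simp add: N_def)

end
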